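(* Assume $x=0$ and let $c_6=313600/s$. Let $u_{t_5}$ be a configuration of protocol $P_o$ at time $t_5$ such that $a_{j,t_5}\le c_6/n$ and $a_{j+1,t_5}>s/40$ for some $j\in\{1,2,3\}$ (indices modulo 3). Then, with probability at least a positive constant independent of $n$, for some $t_6=t_5+O(n)$ a configuration $u_{t_6}$ is reached with $a_{\min,t_6}=0$.
   Context: Population protocol model: $n$ agents; in each step a scheduler picks an ordered pair (initiator, receiver) of distinct agents uniformly at random; rules written $A:B\mapsto C$ mean an initiator in state $A$ turns a receiver in state $B$ into $C$ (initiator unchanged). Time is counted in steps. Protocol $P_o$ has a source state $X$ (never changed) and states $A_i^+,A_i^{++}$, $i\in\{1,2,3\}$, indices modulo 3, $A_i^?$ denoting either flavor. Rules for each $i$: (1) $A_i^?:A_i^?\mapsto A_i^{++}$; (2) $A_i^?:A_{i+1}^?\mapsto A_{i+1}^+$; (3) $A_i^+:A_{i-1}^?\mapsto A_i^+$ w.p. $p$, else $A_{i-1}^+$; (4) $A_i^{++}:A_{i-1}^?\mapsto A_i^+$ w.p. $2p$, else $A_{i-1}^+$; (5) $X:A_j^?\mapsto A_\ell^+$, $\ell$ uniform in $\{1,2,3\}$. Here $p>0$ is a sufficiently small constant. Notation: $x=\#X/n$, $a_i=(\#A_i^++\#A_i^{++})/n$, $s=a_1+a_2+a_3$, $a_{\min}=\min_i a_i$; subscript $t$ denotes the value at step $t$. *)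

theory Defs
  imports "HOL-Probability.Probability"
begin

datatype idx = I1 | I2 | I3

fun nxt :: "idx \<Rightarrow> idx" where
  "nxt I1 = I2" | "nxt I2 = I3" | "nxt I3 = I1"

fun prv :: "idx \<Rightarrow> idx" where
  "prv I1 = I3" | "prv I2 = I1" | "prv I3 = I2"

text \<open>Agent states: source X, A_i^+ (SP i), A_i^++ (SPP i).\<close>
datatype st = SX | SP idx | SPP idx

fun species :: "st \<Rightarrow> idx option" where
  "species SX = None" | "species (SP i) = Some i" | "species (SPP i) = Some i"

text \<open>Receiver of species j, initiator of species i (dbl: initiator is A_i^++).\<close>
definition react :: "real \<Rightarrow> idx \<Rightarrow> bool \<Rightarrow> idx \<Rightarrow> st pmf" where
  "react p i dbl j =
     (if j = i then return_pmf (SPP i)                         \<comment> \<open>rule (1)\<close>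
      else if j = nxt i then return_pmf (SP j)                 \<comment> \<open>rule (2)\<close>
      else map_pmf (\<lambda>b. if b then SP i else SP j)               \<comment> \<open>rules (3),(4): j = i-1\<close>
             (bernoulli_pmf (if dbl then 2 * p else p)))"

definition interact :: "real \<Rightarrow> st \<Rightarrow> st \<Rightarrow> st pmf" where
  "interact p u v =
     (case species v of
        None \<Rightarrow> return_pmf v
      | Some j \<Rightarrow>
          (case u of
             SX \<Rightarrow> map_pmf SP (pmf_of_set {I1, I2, I3})        \<comment> \<open>rule (5)\<close>
           | SP i \<Rightarrow> react p i False j
           | SPP i \<Rightarrow> react p i True j))"

text \<open>A configuration of n agents: agent k (k < n) is in state c k.\<close>
type_synonym cfg = "nat \<Rightarrow> st"

definition step :: "real \<Rightarrow> nat \<Rightarrow> cfg \<Rightarrow> cfg pmf" where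
  "step p n c =
     bind_pmf (pmf_of_set {(a, b). a < n \<and> b < n \<and> a \<noteq> b})
       (\<lambda>(a, b). map_pmf (\<lambda>w. c(b := w)) (interact p (c a) (c b)))"

text \<open>hit K P k x = probability that the Markov chain with kernel K started at x
  visits a state satisfying P at some time t \<le> k.\<close>
fun hit :: "('a \<Rightarrow> 'a pmf) \<Rightarrow> ('a \<Rightarrow> bool) \<Rightarrow> nat \<Rightarrow> 'a \<Rightarrow> real" where
  "hit K P 0 x = (if P x then 1 else 0)"
| "hit K P (Suc k) x = (if P x then 1 else measure_pmf.expectation (K x) (hit K P k))"

definition xfrac :: "nat \<Rightarrow> cfg \<Rightarrow> real" where
  "xfrac n c = real (card {k. k < n \<and> c k = SX}) / real n"

definition afrac :: "nat \<Rightarrow> cfg \<Rightarrow> idx \<Rightarrow> real" where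
  "afrac n c i = real (card {k. k < n \<and> species (c k) = Some i}) / real n"

definition sfrac :: "nat \<Rightarrow> cfg \<Rightarrow> real" where
  "sfrac n c = afrac n c I1 + afrac n c I2 + afrac n c I3"

definition amin :: "nat \<Rightarrow> cfg \<Rightarrow> real" where
  "amin n c = min (afrac n c I1) (min (afrac n c I2) (afrac n c I3))"

definition c6 :: "nat \<Rightarrow> cfg \<Rightarrow> real" where
  "c6 n c = 313600 / sfrac n c"

end

theory Submission
  imports Defs
begin

(* Since x = 0, every agent is in A_1, A_2 or A_3, and the hypotheses say that A_j has at most
   K = 313600 agents while A_(j+1) has more than n/40. During the first k = n/80 steps A_(j+1)
   keeps at least k agents, as every step changes a single agent. In each of these steps #A_j
   can only grow if the initiator lies in A_j (probability at most K/(n-1)), and it drops when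
   an A_(j+1) initiator converts an A_j receiver (probability at least beta = k p/(n(n-1))).
   Comparing #A_j with a binomial count, A_j is emptied within k steps with probability at least
   r^k beta^K (k choose K) for r = 1 - K/(n-1) - beta; this is bounded below independently of n
   because k beta and k (1 - r) are both of order 1. *)

lemma hit_nonneg: "0 \<le> hit K P k x"
  and hit_le_one: "hit K P k x \<le> 1"
proof (induction k arbitrary: x)
  case (Suc k)
  { case 1
    from Suc show ?case
      by (auto intro!: measure_pmf.integral_ge_const measure_pmf.integrable_const_bound[where B=1]) }
  { case 2
    from Suc show ?case
      by (auto intro!: measure_pmf.integral_le_const measure_pmf.integrable_const_bound[where B=1]) }
qed simp_all

lemma integrable_hit: "integrable (measure_pmf M) (hit K P k)"
  by (rule measure_pmf.integrable_const_bound[where B=1]) (auto simp: hit_nonneg hit_le_one)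

lemma hit_le_hit_Suc: "hit K P k x \<le> hit K P (Suc k) x"
proof (induction k arbitrary: x)
  case 0
  show ?case
    using hit_nonneg by (auto intro!: measure_pmf.integral_ge_const integrable_hit)
next
  case (Suc k)
  then show ?case
    by (auto intro!: integral_mono integrable_hit)
qed

lemma hit_mono: "k \<le> k' \<Longrightarrow> hit K P k x \<le> hit K P k' x"
proof (induction k' rule: dec_induct)
  case (step m)
  then show ?case using hit_le_hit_Suc[of K P m x] by linarith
qed simp

(* Reaching zero from m within k steps: choose the m steps that decrease the count. Using r^k
   rather than r^(k-m) is what makes the recurrence binom_weight_Suc_Suc_le hold. *)
definition binom_weight :: "real \<Rightarrow> real \<Rightarrow> nat \<Rightarrow> nat \<Rightarrow> real" where
  "binom_weight r \<beta> k m = r ^ k * \<beta> ^ m * real (k choose m)"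

lemma binom_weight_nonneg: "0 \<le> r \<Longrightarrow> 0 \<le> \<beta> \<Longrightarrow> 0 \<le> binom_weight r \<beta> k m"
  by (simp add: binom_weight_def)

lemma binom_weight_le_one:
  assumes r: "0 \<le> r" and \<beta>: "0 \<le> \<beta>" and r\<beta>: "r + \<beta> \<le> 1"
  shows "binom_weight r \<beta> k m \<le> 1"
proof (cases "m \<le> k")
  case False
  then show ?thesis by (simp add: binom_weight_def binomial_eq_0)
next
  case True
  have "binom_weight r \<beta> k m \<le> real (k choose m) * \<beta> ^ m * r ^ (k - m)"
  proof -
    have "r ^ k \<le> r ^ (k - m)"
      using r \<beta> r\<beta> by (intro power_decreasing) auto
    then have "(real (k choose m) * \<beta> ^ m) * r ^ k \<le> (real (k choose m) * \<beta> ^ m) * r ^ (k - m)"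
      using \<beta> by (intro mult_left_mono) auto
    then show ?thesis
      unfolding binom_weight_def by (simp add: algebra_simps)
  qed
  also have "\<dots> \<le> (\<Sum>i\<le>k. real (k choose i) * \<beta> ^ i * r ^ (k - i))"
    using True r \<beta> by (intro member_le_sum) auto
  also have "\<dots> = (\<beta> + r) ^ k"
    by (rule binomial_ring[symmetric])
  also have "\<dots> \<le> 1"
    using r \<beta> r\<beta> by (intro power_le_one) auto
  finally show ?thesis .
qed

lemma binom_weight_Suc_le:
  assumes r: "0 \<le> r" and \<beta>: "0 \<le> \<beta>" and \<beta>k: "\<beta> * k \<le> 1"
  shows "binom_weight r \<beta> k (Suc m) \<le> binom_weight r \<beta> k m"
proof -
  have "Suc m * (k choose Suc m) \<le> k * (k choose m)"
  proof (cases k)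
    case (Suc k')
    have "Suc m * (k choose Suc m) = k * (k' choose m)"
      by (simp only: Suc Suc_times_binomial)
    also have "\<dots> \<le> k * (k choose m)"
      using binomial_right_mono[of k' k m] Suc by (intro mult_le_mono2) simp
    finally show ?thesis .
  qed simp
  then have "k choose Suc m \<le> k * (k choose m)"
    by (rule order_trans[rotated]) simp
  then have "real (k choose Suc m) \<le> real k * real (k choose m)"
    by (metis of_nat_le_iff of_nat_mult)
  then have "\<beta> * real (k choose Suc m) \<le> (\<beta> * k) * real (k choose m)"
    using \<beta> by (simp add: mult_left_mono mult.assoc)
  also have "\<dots> \<le> real (k choose m)"
    using mult_right_mono[OF \<beta>k, of "real (k choose m)"] by simp
  finally have "(r ^ k * \<beta> ^ m) * (\<beta> * real (k choose Suc m)) \<le> (r ^ k * \<beta> ^ m) * real (k choose m)"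
    using r \<beta> by (intro mult_left_mono) auto
  then show ?thesis
    by (simp add: binom_weight_def algebra_simps)
qed

lemma binom_weight_antimono:
  assumes "0 \<le> r" "0 \<le> \<beta>" "\<beta> * k \<le> 1" "m \<le> m'"
  shows "binom_weight r \<beta> k m' \<le> binom_weight r \<beta> k m"
  using assms(4)
proof (induction m' rule: dec_induct)
  case (step i)
  then show ?case using binom_weight_Suc_le[OF assms(1-3), of i] by linarith
qed simp

lemma binom_weight_Suc_Suc_le:
  assumes "0 \<le> r" "r \<le> 1" "0 \<le> \<beta>"
  shows "binom_weight r \<beta> (Suc k) (Suc m) \<le> r * binom_weight r \<beta> k (Suc m) + \<beta> * binom_weight r \<beta> k m"
proof -
  have "r ^ Suc k * \<beta> ^ Suc m * real (k choose m) \<le> r ^ k * \<beta> ^ Suc m * real (k choose m)"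
    using assms by (intro mult_right_mono) (auto simp: mult_left_le_one_le)
  then show ?thesis
    by (simp add: binom_weight_def algebra_simps)
qed

lemma expectation_ge_two_levels:
  fixes M :: "'a pmf" and g :: "'a \<Rightarrow> real"
  assumes g: "integrable M g" "\<And>y. y \<in> set_pmf M \<Longrightarrow> 0 \<le> g y"
    and A: "\<And>y. y \<in> set_pmf M \<Longrightarrow> y \<in> A \<Longrightarrow> v \<le> g y"
    and B: "\<And>y. y \<in> set_pmf M \<Longrightarrow> y \<in> B \<Longrightarrow> u \<le> g y"
    and uv: "0 \<le> v" "v \<le> u"
    and a: "a \<le> measure_pmf.prob M A" and b: "b \<le> measure_pmf.prob M B"
  shows "a * v + b * (u - v) \<le> measure_pmf.expectation M g"
proof -
  have "a * v + b * (u - v) \<le> measure_pmf.prob M A * v + measure_pmf.prob M B * (u - v)"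
    using a b uv by (intro add_mono mult_right_mono) auto
  also have "\<dots> = measure_pmf.expectation M (\<lambda>y. v * indicator A y + (u - v) * indicator B y)"
    by (subst Bochner_Integration.integral_add) (auto intro!: integrable_real_indicator simp: less_top[symmetric])
  also have "\<dots> \<le> measure_pmf.expectation M g"
  proof (intro integral_mono_AE g(1) AE_pmfI)
    fix y assume y: "y \<in> set_pmf M"
    show "v * indicator A y + (u - v) * indicator B y \<le> g y"
      using A[OF y] B[OF y] g(2)[OF y] uv by (auto simp: indicator_def)
  qed (auto intro!: integrable_real_indicator simp: less_top[symmetric])
  finally show ?thesis .
qed

lemma hit_ge_binom_weight:
  fixes K :: "'a \<Rightarrow> 'a pmf" and f :: "'a \<Rightarrow> nat" and I :: "nat \<Rightarrow> 'a \<Rightarrow> bool"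
  assumes inv: "\<And>k x y. I (Suc k) x \<Longrightarrow> y \<in> set_pmf (K x) \<Longrightarrow> I k y"
    and target: "\<And>x. f x = 0 \<Longrightarrow> P x"
    and stay: "\<And>k x. I (Suc k) x \<Longrightarrow> f x \<le> M \<Longrightarrow> 1 - \<alpha> \<le> measure_pmf.prob (K x) {y. f y \<le> f x}"
    and drop: "\<And>k x. I (Suc k) x \<Longrightarrow> 0 < f x \<Longrightarrow> \<beta> \<le> measure_pmf.prob (K x) {y. f y < f x}"
    and \<alpha>: "0 \<le> \<alpha>" and \<beta>: "0 \<le> \<beta>" and r: "r = 1 - \<alpha> - \<beta>" "0 \<le> r"
  shows "\<beta> * k \<le> 1 \<Longrightarrow> I k x \<Longrightarrow> f x \<le> m \<Longrightarrow> m \<le> M \<Longrightarrow> binom_weight r \<beta> k m \<le> hit K P k x"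
proof (induction k arbitrary: x m)
  case 0
  then show ?case
    using target[of x] hit_nonneg[of K P 0 x] by (cases m) (auto simp: binom_weight_def)
next
  case (Suc k)
  have \<beta>k: "\<beta> * k \<le> 1"
    using Suc.prems(1) \<beta> mult_left_mono[of "real k" "real (Suc k)" \<beta>] by simp
  show ?case
  proof (cases "P x")
    case True
    then show ?thesis
      using binom_weight_le_one[of r \<beta>] r \<alpha> \<beta> by simp
  next
    case False
    then obtain m1 where m1: "f x = Suc m1"
      using target not0_implies_Suc by blast
    have "binom_weight r \<beta> (Suc k) m \<le> binom_weight r \<beta> (Suc k) (Suc m1)"
      using Suc.prems m1 r \<beta> by (intro binom_weight_antimono) auto
    also have "\<dots> \<le> r * binom_weight r \<beta> k (Suc m1) + \<beta> * binom_weight r \<beta> k m1"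
      using r \<alpha> \<beta> by (intro binom_weight_Suc_Suc_le) auto
    also have "\<dots> = (1 - \<alpha>) * binom_weight r \<beta> k (Suc m1)
        + \<beta> * (binom_weight r \<beta> k m1 - binom_weight r \<beta> k (Suc m1))"
      unfolding r by (simp add: algebra_simps)
    also have "\<dots> \<le> measure_pmf.expectation (K x) (hit K P k)"
    proof (rule expectation_ge_two_levels)
      fix y assume y: "y \<in> set_pmf (K x)"
      have Iy: "I k y"
        using inv[OF Suc.prems(2) y] .
      show "0 \<le> hit K P k y"
        by (rule hit_nonneg)
      show "binom_weight r \<beta> k (Suc m1) \<le> hit K P k y" if "y \<in> {y. f y \<le> f x}"
        using Suc.IH[OF \<beta>k Iy] that Suc.prems m1 by simp
      show "binom_weight r \<beta> k m1 \<le> hit K P k y" if "y \<in> {y. f y < f x}"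
        using Suc.IH[OF \<beta>k Iy] that Suc.prems m1 by simp
    next
      show "1 - \<alpha> \<le> measure_pmf.prob (K x) {y. f y \<le> f x}"
        using stay[OF Suc.prems(2)] Suc.prems by simp
      show "\<beta> \<le> measure_pmf.prob (K x) {y. f y < f x}"
        using drop[OF Suc.prems(2)] m1 by simp
    qed (use r \<beta> \<beta>k in \<open>auto intro: integrable_hit binom_weight_nonneg binom_weight_Suc_le\<close>)
    also have "\<dots> = hit K P (Suc k) x"
      using False by simp
    finally show ?thesis .
  qed
qed

definition agents :: "nat \<Rightarrow> cfg \<Rightarrow> idx \<Rightarrow> nat set" where
  "agents n c i = {k. k < n \<and> species (c k) = Some i}"

definition no_source :: "nat \<Rightarrow> cfg \<Rightarrow> bool" where
  "no_source n c \<longleftrightarrow> (\<forall>k<n. c k \<noteq> SX)"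

definition agent_pairs :: "nat \<Rightarrow> (nat \<times> nat) set" where
  "agent_pairs n = {(a, b). a < n \<and> b < n \<and> a \<noteq> b}"

lemma finite_agents [simp]: "finite (agents n c i)"
  by (rule finite_subset[of _ "{..<n}"]) (auto simp: agents_def)

lemma finite_agent_pairs [simp]: "finite (agent_pairs n)"
  by (rule finite_subset[of _ "{..<n} \<times> {..<n}"]) (auto simp: agent_pairs_def)

lemma agent_pairs_nonempty:
  assumes "2 \<le> n"
  shows "agent_pairs n \<noteq> {}"
proof -
  have "(0, 1) \<in> agent_pairs n"
    using assms by (simp add: agent_pairs_def)
  then show ?thesis
    by blast
qed

lemma card_agent_pairs: "real (card (agent_pairs n)) = real n * (real n - 1)"
proof -
  have "agent_pairs n = {..<n} \<times> {..<n} - (\<lambda>a. (a, a)) ` {..<n}"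
    by (auto simp: agent_pairs_def)
  then have "card (agent_pairs n) = n * n - n"
    by (simp add: card_Diff_subset card_image card_cartesian_product inj_on_def image_subset_iff)
  then show ?thesis
    by (simp add: of_nat_diff algebra_simps)
qed

lemma nxt_ne_self [simp]: "nxt j \<noteq> j"
  by (cases j) auto

lemma finite_set_pmf_interact: "finite (set_pmf (interact p u v))"
  by (cases u; cases v) (auto simp: interact_def react_def)

lemma interact_ne_SX: "v \<noteq> SX \<Longrightarrow> w \<in> set_pmf (interact p u v) \<Longrightarrow> w \<noteq> SX"
  by (cases u; cases v) (auto simp: interact_def react_def split: if_splits)

lemma species_interact:
  "u \<noteq> SX \<Longrightarrow> w \<in> set_pmf (interact p u v) \<Longrightarrow> species w = species u \<or> species w = species v"
  by (cases u; cases v) (auto simp: interact_def react_def split: if_splits)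

lemma pmf_interact_nxt_ge:
  assumes "species u = Some (nxt j)" "species v = Some j" "0 \<le> p" "2 * p \<le> 1"
  shows "p \<le> pmf (interact p u v) (SP (nxt j))"
proof -
  have "measure_pmf.prob (bernoulli_pmf q) {x. x} = q" if "0 \<le> q" "q \<le> 1" for q
  proof -
    have "{x. x} = {True}"
      by auto
    then show ?thesis
      using that by (simp add: measure_pmf_single)
  qed
  then show ?thesis
    using assms by (cases u; cases v; cases j) (auto simp: interact_def react_def pmf_map vimage_def)
qed

lemma set_pmf_step:
  assumes "2 \<le> n" "d \<in> set_pmf (step p n c)"
  obtains a b w where "(a, b) \<in> agent_pairs n" "w \<in> set_pmf (interact p (c a) (c b))" "d = c(b := w)"
proof -
  have "set_pmf (pmf_of_set (agent_pairs n)) = agent_pairs n"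
    using agent_pairs_nonempty[OF assms(1)] by (intro set_pmf_of_set) auto
  then show ?thesis
    using assms(2) that unfolding step_def agent_pairs_def[symmetric] by fastforce
qed

lemma prob_step:
  assumes "2 \<le> n"
  shows "measure_pmf.prob (step p n c) A =
    (\<Sum>(a, b)\<in>agent_pairs n. measure_pmf.prob (interact p (c a) (c b)) {w. c(b := w) \<in> A})
      / (real n * (real n - 1))"
proof -
  have "measure_pmf.expectation (step p n c) (indicator A :: cfg \<Rightarrow> real) =
      (\<Sum>x\<in>agent_pairs n. measure_pmf.expectation ((\<lambda>(a, b). map_pmf (\<lambda>w. c(b := w))
         (interact p (c a) (c b))) x) (indicator A) /\<^sub>R real (card (agent_pairs n)))"
    unfolding step_def agent_pairs_def[symmetric]
    by (rule pmf_expectation_bind_pmf_of_set[OF agent_pairs_nonempty[OF assms] finite_agent_pairs])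
      (auto simp: finite_set_pmf_interact split: prod.splits)
  then show ?thesis
    by (simp add: card_agent_pairs sum_divide_distrib case_prod_beta vimage_def divide_inverse_commute
        sum_distrib_left)
qed

lemma no_source_step:
  assumes "2 \<le> n" "no_source n c" "d \<in> set_pmf (step p n c)"
  shows "no_source n d"
proof -
  obtain a b w where b: "(a, b) \<in> agent_pairs n"
    and w: "w \<in> set_pmf (interact p (c a) (c b))" and d: "d = c(b := w)"
    using set_pmf_step[OF assms(1,3)] .
  have "c b \<noteq> SX"
    using assms(2) b by (auto simp: no_source_def agent_pairs_def)
  then show ?thesis
    using assms(2) interact_ne_SX[OF _ w] by (auto simp: no_source_def d)
qed

lemma card_agents_le_Suc_step:
  assumes "2 \<le> n" "d \<in> set_pmf (step p n c)"
  shows "card (agents n c i) \<le> Suc (card (agents n d i))"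
proof -
  obtain a b w where b: "(a, b) \<in> agent_pairs n" and d: "d = c(b := w)"
    using set_pmf_step[OF assms] .
  have "agents n c i - {b} \<subseteq> agents n d i"
    by (auto simp: agents_def d)
  then have "card (agents n c i - {b}) \<le> card (agents n d i)"
    by (intro card_mono) auto
  then show ?thesis
    by (simp add: card_Diff_singleton_if split: if_splits)
qed

lemma card_agent_pairs_initiator:
  "card {(a, b) \<in> agent_pairs n. species (c a) = Some j} \<le> card (agents n c j) * n"
proof -
  have "{(a, b) \<in> agent_pairs n. species (c a) = Some j} \<subseteq> agents n c j \<times> {..<n}"
    by (auto simp: agents_def agent_pairs_def)
  then have "card {(a, b) \<in> agent_pairs n. species (c a) = Some j} \<le> card (agents n c j \<times> {..<n})"
    by (intro card_mono) auto
  then show ?thesis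
    by (simp add: card_cartesian_product)
qed

lemma prob_step_card_agents_le:
  assumes n: "2 \<le> n" and c: "no_source n c"
  shows "1 - real (card (agents n c j)) / (real n - 1)
    \<le> measure_pmf.prob (step p n c) {d. card (agents n d j) \<le> card (agents n c j)}"
proof -
  define E where "E = {d. card (agents n d j) \<le> card (agents n c j)}"
  define S where "S = agent_pairs n"
  define Q where "Q = {(a, b) \<in> S. species (c a) = Some j}"
  let ?pr = "\<lambda>(a, b). measure_pmf.prob (interact p (c a) (c b)) {w. c(b := w) \<in> E}"
  have "?pr x = 1" if x: "x \<in> S - Q" for x
  proof -
    obtain a b where ab: "x = (a, b)" "a < n" "b < n" "species (c a) \<noteq> Some j"
      using x by (auto simp: S_def Q_def agent_pairs_def)
    have "c(b := w) \<in> E" if w: "w \<in> set_pmf (interact p (c a) (c b))" for w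
    proof -
      have "species w = Some j \<longrightarrow> species (c b) = Some j"
        using species_interact[OF _ w] c ab by (auto simp: no_source_def)
      then have "agents n (c(b := w)) j \<subseteq> agents n c j"
        by (auto simp: agents_def)
      then show ?thesis
        by (simp add: E_def card_mono)
    qed
    then show ?thesis
      by (simp add: ab measure_pmf.prob_eq_1 AE_measure_pmf_iff)
  qed
  then have sum_ge: "real (card (S - Q)) \<le> (\<Sum>x\<in>S. ?pr x)"
    by (intro order_trans[OF _ sum_mono2[of S "S - Q"]]) (auto simp: S_def)
  have "card Q \<le> card (agents n c j) * n"
    unfolding Q_def S_def by (rule card_agent_pairs_initiator)
  moreover have "real (card (S - Q)) = real (card S) - real (card Q)"
  proof -
    have "Q \<subseteq> S"
      by (auto simp: Q_def)
    then show ?thesis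
      by (simp add: card_Diff_subset card_mono of_nat_diff S_def finite_subset)
  qed
  ultimately have "real n * (real n - 1) - real (card (agents n c j)) * real n \<le> real (card (S - Q))"
    by (simp add: S_def card_agent_pairs flip: of_nat_mult)
  have "1 - real (card (agents n c j)) / (real n - 1)
      = (real n * (real n - 1) - real (card (agents n c j)) * real n) / (real n * (real n - 1))"
    using n by (simp add: field_simps)
  also have "\<dots> \<le> (\<Sum>x\<in>S. ?pr x) / (real n * (real n - 1))"
    using n sum_ge \<open>_ \<le> real (card (S - Q))\<close> by (intro divide_right_mono) auto
  also have "\<dots> = measure_pmf.prob (step p n c) E"
    unfolding prob_step[OF n] S_def ..
  finally show ?thesis
    unfolding E_def .
qed

lemma prob_step_card_agents_less:
  assumes n: "2 \<le> n" and p: "0 \<le> p" "2 * p \<le> 1" and b0: "b0 \<in> agents n c j"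
  shows "p * real (card (agents n c (nxt j))) / (real n * (real n - 1))
    \<le> measure_pmf.prob (step p n c) {d. card (agents n d j) < card (agents n c j)}"
proof -
  define E where "E = {d. card (agents n d j) < card (agents n c j)}"
  define D where "D = (\<lambda>a. (a, b0)) ` agents n c (nxt j)"
  let ?pr = "\<lambda>(a, b). measure_pmf.prob (interact p (c a) (c b)) {w. c(b := w) \<in> E}"
  have D: "D \<subseteq> agent_pairs n"
    using b0 by (auto simp: D_def agents_def agent_pairs_def)
  have "p \<le> ?pr x" if x: "x \<in> D" for x
  proof -
    obtain a where a: "x = (a, b0)" "species (c a) = Some (nxt j)"
      using x by (auto simp: D_def agents_def)
    have "agents n (c(b0 := SP (nxt j))) j = agents n c j - {b0}"
      by (auto simp: agents_def)
    then have "c(b0 := SP (nxt j)) \<in> E"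
      using b0 card_Diff1_less[OF finite_agents b0] by (simp add: E_def)
    then have "pmf (interact p (c a) (c b0)) (SP (nxt j)) \<le> ?pr x"
      by (auto simp: a measure_pmf_single[symmetric] intro!: measure_pmf.finite_measure_mono)
    moreover have "p \<le> pmf (interact p (c a) (c b0)) (SP (nxt j))"
      using b0 a p by (intro pmf_interact_nxt_ge) (auto simp: agents_def)
    ultimately show ?thesis
      by linarith
  qed
  then have "p * real (card D) \<le> (\<Sum>x\<in>D. ?pr x)"
    using sum_mono[of D "\<lambda>_. p"] by (simp add: mult.commute)
  also have "\<dots> \<le> (\<Sum>x\<in>agent_pairs n. ?pr x)"
    using D by (intro sum_mono2) auto
  finally have "p * real (card (agents n c (nxt j))) \<le> (\<Sum>x\<in>agent_pairs n. ?pr x)"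
    by (simp add: D_def card_image inj_on_def)
  then show ?thesis
    unfolding prob_step[OF n] E_def[symmetric] using n by (intro divide_right_mono) auto
qed

lemma afrac_eq_card_agents: "afrac n c i = real (card (agents n c i)) / real n"
  by (simp add: afrac_def agents_def)

lemma amin_eq_zero_if_no_agents:
  assumes "agents n c j = {}"
  shows "amin n c = 0"
proof -
  have j: "afrac n c j = 0" and nonneg: "\<And>i. 0 \<le> afrac n c i"
    using assms by (simp_all add: afrac_eq_card_agents)
  show ?thesis
    using j nonneg[of I1] nonneg[of I2] nonneg[of I3] by (cases j) (auto simp: amin_def)
qed

lemma hit_amin_zero_ge_binom_weight:
  assumes n: "2 \<le> n" and p: "0 \<le> p" "2 * p \<le> 1"
    and \<beta>: "\<beta> = real B * p / (real n * (real n - 1))"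
    and r: "r = 1 - real K / (real n - 1) - \<beta>" "0 \<le> r"
    and \<beta>k: "\<beta> * k \<le> 1"
    and c: "no_source n c" "card (agents n c j) \<le> K" "B + k \<le> card (agents n c (nxt j))"
  shows "binom_weight r \<beta> k K \<le> hit (step p n) (\<lambda>d. amin n d = 0) k c"
  \<comment> \<open>A_(j+1) loses at most one agent per step, so with k steps left it still has B + k agents.\<close>
proof (rule hit_ge_binom_weight[where f = "\<lambda>d. card (agents n d j)" and M = K and \<alpha> = "real K / (real n - 1)"
      and I = "\<lambda>k d. no_source n d \<and> B + k \<le> card (agents n d (nxt j))"])
  fix k d e
  assume "no_source n d \<and> B + Suc k \<le> card (agents n d (nxt j))" "e \<in> set_pmf (step p n d)"
  then show "no_source n e \<and> B + k \<le> card (agents n e (nxt j))"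
    using no_source_step[OF n] card_agents_le_Suc_step[OF n, of e p d "nxt j"] by auto
next
  fix k d
  assume "no_source n d \<and> B + Suc k \<le> card (agents n d (nxt j))" and "card (agents n d j) \<le> K"
  then show "1 - real K / (real n - 1) \<le> measure_pmf.prob (step p n d) {e. card (agents n e j) \<le> card (agents n d j)}"
  proof -
    have "real (card (agents n d j)) / (real n - 1) \<le> real K / (real n - 1)"
      using \<open>card (agents n d j) \<le> K\<close> n by (intro divide_right_mono) auto
    then show ?thesis
      using prob_step_card_agents_le[OF n, of d j p] \<open>no_source n d \<and> _\<close> by linarith
  qed
next
  fix k d
  assume d: "no_source n d \<and> B + Suc k \<le> card (agents n d (nxt j))" "0 < card (agents n d j)"
  then obtain b0 where "b0 \<in> agents n d j"
    by (metis card_gt_0_iff ex_in_conv)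
  moreover have "\<beta> \<le> p * real (card (agents n d (nxt j))) / (real n * (real n - 1))"
    unfolding \<beta> using d n p by (intro divide_right_mono) (auto simp: mult.commute mult_left_mono)
  ultimately show "\<beta> \<le> measure_pmf.prob (step p n d) {e. card (agents n e j) < card (agents n d j)}"
    using prob_step_card_agents_less[OF n p] by (meson order_trans)
qed (use n p \<beta> r \<beta>k c in \<open>auto intro: amin_eq_zero_if_no_agents\<close>)

lemma exp_neg_double_le_one_minus:
  fixes x :: real
  assumes "0 \<le> x" "x \<le> 1/2"
  shows "exp (- 2 * x) \<le> 1 - x"
proof -
  have "- x - 2 * x\<^sup>2 \<le> ln (1 - x)"
    using assms by (rule ln_one_minus_pos_lower_bound)
  moreover have "x\<^sup>2 \<le> x / 2"
    using assms mult_left_mono[of x "1/2" x] by (simp add: power2_eq_square)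
  ultimately have "- 2 * x \<le> ln (1 - x)"
    by linarith
  then have "exp (- 2 * x) \<le> exp (ln (1 - x))"
    by simp
  also have "\<dots> = 1 - x"
    using assms by simp
  finally show ?thesis .
qed

lemma drift_rate_bounds:
  fixes n k K :: nat and p \<beta> :: real
  assumes n: "80 * K + 160 \<le> n" and k: "80 * k \<le> n" "n \<le> 80 * k + 79"
    and p: "0 \<le> p" "p \<le> 1" and \<beta>: "\<beta> = real k * p / (real n * (real n - 1))"
  shows "0 \<le> \<beta>" "\<beta> * k \<le> 1" "real K / (real n - 1) + \<beta> \<le> 1 / 2"
    "k * (real K / (real n - 1) + \<beta>) \<le> (real K + 1) / 40" "p / 25600 \<le> \<beta> * k"
proof -
  have n1: "0 < real n - 1" "real n \<le> 2 * (real n - 1)"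
    using n by auto
  have rk: "80 * real k \<le> real n" "real n \<le> 160 * real k"
    using k n by linarith+
  show \<beta>0: "0 \<le> \<beta>"
    using \<beta> p n1 by simp
  have "\<beta> \<le> real n * 1 / (real n * (real n - 1))"
    unfolding \<beta> using rk p n1 by (intro divide_right_mono mult_mono) auto
  then have \<beta>1: "\<beta> \<le> 1 / (real n - 1)"
    using n1 by simp
  then show x: "real K / (real n - 1) + \<beta> \<le> 1 / 2"
    using n n1 by (simp add: field_simps)
  have "real k * (real K / (real n - 1) + \<beta>) \<le> real n / 80 * ((real K + 1) / (real n - 1))"
    using rk \<beta>0 \<beta>1 n1 by (intro mult_mono) (auto simp: add_divide_distrib)
  also have "\<dots> \<le> (real K + 1) / 40"
  proof -
    have "(real K + 1) * real n \<le> (real K + 1) * (2 * (real n - 1))"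
      using n1 by (intro mult_left_mono) auto
    then show ?thesis
      using n1 by (simp add: field_simps)
  qed
  finally show "k * (real K / (real n - 1) + \<beta>) \<le> (real K + 1) / 40" .
  have N: "0 < real n * (real n - 1)" "real n * (real n - 1) \<le> real n * real n"
    using n1 by auto
  have \<beta>k: "\<beta> * k = p * (real k * real k) / (real n * (real n - 1))"
    unfolding \<beta> by simp
  have "p * (real k * real k) \<le> 1 * (real n * real n / 6400)"
    using mult_mono[OF rk(1) rk(1)] p by (intro mult_mono) auto
  then have "\<beta> * k \<le> real n * real n / 6400 / (real n * (real n - 1))"
    unfolding \<beta>k using N by (intro divide_right_mono) auto
  also have "\<dots> \<le> 1"
    using n1 by (simp add: field_simps)
  finally show "\<beta> * k \<le> 1" .
  have "p * (real n * real n / 25600) \<le> p * (real k * real k)"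
    using mult_mono[OF rk(2) rk(2)] p by (intro mult_left_mono) auto
  then have "p / 25600 \<le> p * (real k * real k) / (real n * real n)"
    using n1 by (simp add: field_simps)
  also have "\<dots> \<le> \<beta> * k"
    unfolding \<beta>k using N p by (intro divide_left_mono) auto
  finally show "p / 25600 \<le> \<beta> * k" .
qed

lemma binom_weight_ge:
  fixes k K :: nat and x \<beta> p :: real
  assumes K: "K \<le> k" "0 < K" and x: "0 \<le> x" "x \<le> 1/2" "k * x \<le> (real K + 1) / 40"
    and \<beta>: "0 \<le> \<beta>" "p / 25600 \<le> \<beta> * k" and p: "0 \<le> p"
  shows "exp (- (real K + 1) / 20) * (p / (25600 * real K)) ^ K \<le> binom_weight (1 - x) \<beta> k K"
proof -
  have "exp (- (real K + 1) / 20) \<le> exp (real k * (- 2 * x))"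
    using x by simp
  also have "\<dots> = exp (- 2 * x) ^ k"
    by (rule exp_of_nat_mult)
  also have "\<dots> \<le> (1 - x) ^ k"
    using x by (intro power_mono exp_neg_double_le_one_minus) auto
  finally have r: "exp (- (real K + 1) / 20) \<le> (1 - x) ^ k" .
  have "p / 25600 / real K \<le> \<beta> * real k / real K"
    using \<beta> K by (intro divide_right_mono) auto
  then have "(p / (25600 * real K)) ^ K \<le> (\<beta> * real k / real K) ^ K"
    using p by (intro power_mono) (auto simp: divide_divide_eq_left)
  also have "\<dots> = \<beta> ^ K * (real k / real K) ^ K"
    by (simp add: power_mult_distrib power_divide)
  also have "\<dots> \<le> \<beta> ^ K * real (k choose K)"
    using \<beta> binomial_ge_n_over_k_pow_k[OF K(1)] by (intro mult_left_mono) auto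
  finally have b: "(p / (25600 * real K)) ^ K \<le> \<beta> ^ K * real (k choose K)" .
  show ?thesis
    using mult_mono[OF r b] x p by (simp add: binom_weight_def mult.assoc)
qed

lemma no_source_if_xfrac_eq_0: "0 < n \<Longrightarrow> xfrac n c = 0 \<Longrightarrow> no_source n c"
  by (auto simp: xfrac_def no_source_def card_eq_0_iff)

lemma sum_card_agents:
  assumes "no_source n c"
  shows "card (agents n c I1) + card (agents n c I2) + card (agents n c I3) = n"
proof -
  have "{..<n} = agents n c I1 \<union> agents n c I2 \<union> agents n c I3"
  proof (intro equalityI subsetI)
    fix k assume k: "k \<in> {..<n}"
    then obtain i where "species (c k) = Some i"
      using assms by (cases "c k") (auto simp: no_source_def)
    with k show "k \<in> agents n c I1 \<union> agents n c I2 \<union> agents n c I3"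
      by (cases i) (auto simp: agents_def)
  qed (auto simp: agents_def)
  then have "n = card (agents n c I1 \<union> agents n c I2 \<union> agents n c I3)"
    by (metis card_lessThan)
  also have "\<dots> = card (agents n c I1) + card (agents n c I2) + card (agents n c I3)"
    by (subst card_Un_disjoint; auto simp: agents_def card_Un_disjoint)+
  finally show ?thesis ..
qed

lemma sfrac_eq_1: "0 < n \<Longrightarrow> no_source n c \<Longrightarrow> sfrac n c = 1"
  using sum_card_agents[of n c]
  by (simp add: sfrac_def afrac_eq_card_agents add_divide_distrib[symmetric] flip: of_nat_add)

lemma agents_bounds_if_hypotheses:
  assumes "0 < n" "xfrac n c = 0" "afrac n c j \<le> c6 n c / real n" "afrac n c (nxt j) > sfrac n c / 40"
  shows "no_source n c" "card (agents n c j) \<le> 313600" "n < 40 * card (agents n c (nxt j))"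
proof -
  show c: "no_source n c"
    using assms(1,2) by (rule no_source_if_xfrac_eq_0)
  show "card (agents n c j) \<le> 313600" "n < 40 * card (agents n c (nxt j))"
    using assms sfrac_eq_1[OF assms(1) c] by (auto simp: afrac_eq_card_agents c6_def field_simps)
qed

lemma hit_amin_zero_ge:
  fixes n :: nat and p :: real and K :: nat
  assumes n: "80 * K + 160 \<le> n" and K: "0 < K" and p: "0 \<le> p" "2 * p \<le> 1"
    and c: "no_source n c" "card (agents n c j) \<le> K" "n < 40 * card (agents n c (nxt j))"
  shows "exp (- (real K + 1) / 20) * (p / (25600 * real K)) ^ K
    \<le> hit (step p n) (\<lambda>d. amin n d = 0) n c"
proof -
  define k where "k = n div 80"
  define \<beta> where "\<beta> = real k * p / (real n * (real n - 1))"
  define x where "x = real K / (real n - 1) + \<beta>"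
  have k: "80 * k \<le> n" "n \<le> 80 * k + 79" "K \<le> k"
    using n unfolding k_def by linarith+
  have "p \<le> 1"
    using p by linarith
  note rates = drift_rate_bounds[OF n k(1,2) p(1) this \<beta>_def]
  have x: "0 \<le> x" "x \<le> 1/2" "k * x \<le> (real K + 1) / 40"
    using rates p n unfolding x_def by auto
  have "exp (- (real K + 1) / 20) * (p / (25600 * real K)) ^ K \<le> binom_weight (1 - x) \<beta> k K"
    using rates p by (intro binom_weight_ge k x K) auto
  also have "\<dots> \<le> hit (step p n) (\<lambda>d. amin n d = 0) k c"
  proof (rule hit_amin_zero_ge_binom_weight[OF _ p \<beta>_def _ _ _ c(1,2)])
    show "1 - x = 1 - real K / (real n - 1) - \<beta>"
      by (simp add: x_def)
    show "k + k \<le> card (agents n c (nxt j))"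
      using k c(3) by linarith
  qed (use n x rates(2) in auto)
  also have "\<dots> \<le> hit (step p n) (\<lambda>d. amin n d = 0) n c"
    using k by (intro hit_mono) auto
  finally show ?thesis .
qed

theorem lemma10:
  shows "\<exists>p0>0. \<forall>p::real. 0 < p \<and> p < p0 \<longrightarrow>
           (\<exists>\<gamma>>0. \<exists>C::nat. \<exists>n0::nat. \<forall>n\<ge>n0. \<forall>(c::cfg) (j::idx).
              xfrac n c = 0 \<and>
              afrac n c j \<le> c6 n c / real n \<and>
              afrac n c (nxt j) > sfrac n c / 40 \<longrightarrow>
              hit (step p n) (\<lambda>d. amin n d = 0) (C * n) c \<ge> \<gamma>)"
proof (rule exI[of _ "1/4"], intro conjI allI impI)
  fix p :: real
  assume p: "0 < p \<and> p < 1/4"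
  define K :: nat where "K = 313600"
  define \<gamma> where "\<gamma> = exp (- (real K + 1) / 20) * (p / (25600 * real K)) ^ K"
  have K: "0 < K" "313600 = K"
    by (simp_all add: K_def)
  have "\<gamma> \<le> hit (step p n) (\<lambda>d. amin n d = 0) (1 * n) c"
    if n: "80 * K + 160 \<le> n" and H: "xfrac n c = 0 \<and> afrac n c j \<le> c6 n c / real n \<and>
      afrac n c (nxt j) > sfrac n c / 40" for n c j
  proof -
    have "no_source n c" "card (agents n c j) \<le> K" "n < 40 * card (agents n c (nxt j))"
      using agents_bounds_if_hypotheses[of n c j] H n unfolding K(2) by auto
    then show ?thesis
      unfolding \<gamma>_def mult_1 using n p K(1) by (intro hit_amin_zero_ge) auto
  qed
  moreover have "0 < \<gamma>"
    using p K(1) by (simp add: \<gamma>_def)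
  ultimately show "\<exists>\<gamma>>0. \<exists>C::nat. \<exists>n0::nat. \<forall>n\<ge>n0. \<forall>(c::cfg) (j::idx).
              xfrac n c = 0 \<and>
              afrac n c j \<le> c6 n c / real n \<and>
              afrac n c (nxt j) > sfrac n c / 40 \<longrightarrow>
              hit (step p n) (\<lambda>d. amin n d = 0) (C * n) c \<ge> \<gamma>"
    by blast
qed simp

end
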